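(* Let $H\in(1/2,1)$, $\alpha\in(1-H,1)$, $T>0$, $N\ge2$, $h=T/N$, $t_n=nh$. Then there is a constant $C$ (independent of $N$) such that for all $1\le k<l\le N$, all $0<u\le t_{k-1}<s\le t_k$ and all $\tau\in(t_{l-1},t_l]$, $$\int_{t_{k-1}}^{t_{l-1}}\big((t_{l-1}-v)^{\alpha-1}-(\tau-v)^{\alpha-1}\big)|v-u|^{2H-2}\,\mathrm dv\le Ch^\alpha(\tau-s)^{2H-2}.$$ *)

theory Defs
  imports "HOL-Analysis.Analysis"
begin

end

theory Submission
  imports Defs
begin

text \<open>
  Put \<open>a = t (k - 1)\<close>, \<open>b = t (l - 1)\<close>, \<open>\<beta> = 2 H - 2\<close> and \<open>Y = (b - a) / 2 \<ge> h / 2\<close>.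
  Since \<open>u \<le> a\<close>, the weight \<open>\<bar>v - u\<bar> powr \<beta>\<close> is at most \<open>(v - a) powr \<beta>\<close>.
  On the left half of \<open>[a, b]\<close> we have \<open>b - v \<ge> Y\<close>, so by the mean value theorem the
  kernel difference \<open>(b - v) powr (\<alpha> - 1) - (\<tau> - v) powr (\<alpha> - 1)\<close> is at most
  \<open>(1 - \<alpha>) h Y powr (\<alpha> - 2)\<close>; on the right half \<open>(v - a) powr \<beta> \<le> Y powr \<beta>\<close>, while the
  kernel difference integrates to at most \<open>h powr \<alpha> / \<alpha>\<close> over \<open>[a, b]\<close>.
  Both contributions are \<open>O(h powr \<alpha> * Y powr \<beta>)\<close>, and \<open>\<tau> - s \<le> 4 Y\<close> bounds
  \<open>Y powr \<beta>\<close> by \<open>4 powr (- \<beta>) * (\<tau> - s) powr \<beta>\<close>.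
\<close>

lemma has_integral_powr_shifted:
  fixes a b c p :: real
  assumes "-1 < p" "c \<le> a" "a \<le> b"
  shows "((\<lambda>v. (v - c) powr p) has_integral ((b - c) powr (p + 1) - (a - c) powr (p + 1)) / (p + 1)) {a..b}"
proof -
  have from_c: "((\<lambda>v. (v - c) powr p) has_integral (x - c) powr (p + 1) / (p + 1)) {c..x}"
    if "c \<le> x" for x
  proof -
    have "((\<lambda>v. v powr p) has_integral (x - c) powr (p + 1) / (p + 1)) (cbox 0 (x - c))"
      using has_integral_powr_from_0[of p "x - c"] assms that by simp
    from has_integral_affinity'[OF this, of 1 "-c"] show ?thesis
      by simp
  qed
  have cb: "c \<le> b" using assms by simp
  have "(\<lambda>v. (v - c) powr p) integrable_on {a..b}"
    by (rule integrable_subinterval_real[OF has_integral_integrable[OF from_c[OF cb]]])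
       (use assms in simp)
  then obtain I where I: "((\<lambda>v. (v - c) powr p) has_integral I) {a..b}"
    by blast
  have "(a - c) powr (p + 1) / (p + 1) + I = (b - c) powr (p + 1) / (p + 1)"
    using has_integral_unique[OF has_integral_combine[OF assms(2,3) from_c[OF assms(2)] I]
        from_c[OF cb]] .
  then have "I = ((b - c) powr (p + 1) - (a - c) powr (p + 1)) / (p + 1)"
    unfolding diff_divide_distrib by linarith
  with I show ?thesis
    by simp
qed

lemma has_integral_powr_reflected:
  fixes a b c p :: real
  assumes "-1 < p" "a \<le> b" "b \<le> c"
  shows "((\<lambda>v. (c - v) powr p) has_integral ((c - a) powr (p + 1) - (c - b) powr (p + 1)) / (p + 1)) {a..b}"
proof -
  have "((\<lambda>x. (x - (-c)) powr p) has_integral ((c - a) powr (p + 1) - (c - b) powr (p + 1)) / (p + 1)) {-b..-a}"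
    using has_integral_powr_shifted[of p "-c" "-b" "-a"] assms by simp
  then show ?thesis
    by (subst has_integral_reflect_real[symmetric]) (simp add: add.commute)
qed

lemma set_integral_of_nonneg_has_integral:
  fixes f :: "real \<Rightarrow> real"
  assumes "(f has_integral I) {a..b}" "\<And>x. x \<in> {a..b} \<Longrightarrow> 0 \<le> f x" "f \<in> borel_measurable borel"
  shows "set_integrable lborel {a..b} f" "(LBINT x:{a..b}. f x) = I"
proof -
  have "f absolutely_integrable_on {a..b}"
    using assms by (intro nonnegative_absolutely_integrable_1) (auto simp: integrable_on_def)
  then show integrable: "set_integrable lborel {a..b} f"
    unfolding set_integrable_def using assms(3) by (subst (asm) integrable_completion) auto
  show "(LBINT x:{a..b}. f x) = I"
    using set_borel_integral_eq_integral(2)[OF integrable] assms(1) by (simp add: integral_unique)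
qed

lemma set_integral_mono_majorant:
  fixes f g :: "'a \<Rightarrow> real"
  assumes "set_integrable M A g" "AE x\<in>A in M. f x \<le> g x" "AE x\<in>A in M. 0 \<le> g x"
  shows "(LINT x:A|M. f x) \<le> (LINT x:A|M. g x)"
  unfolding set_lebesgue_integral_def
proof (rule integral_mono_AE')
  show "integrable M (\<lambda>x. indicator A x *\<^sub>R g x)"
    using assms(1) by (simp add: set_integrable_def)
  show "AE x in M. indicator A x *\<^sub>R f x \<le> indicator A x *\<^sub>R g x"
    using assms(2) by eventually_elim (simp add: indicator_def)
  show "AE x in M. 0 \<le> indicator A x *\<^sub>R g x"
    using assms(3) by eventually_elim (simp add: indicator_def)
qed

lemma powr_sub_powr_add_le:
  fixes q y d Y :: real
  assumes "q \<le> 0" "0 < Y" "Y \<le> y" "0 < d"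
  shows "y powr q - (y + d) powr q \<le> - q * d * Y powr (q - 1)"
proof -
  obtain z where z: "y < z" "(y + d) powr q - y powr q = (y + d - y) * (q * z powr (q - 1))"
  proof (rule MVT2[of y "y + d" "\<lambda>x. x powr q" "\<lambda>x. q * x powr (q - 1)", elim_format])
    show "((\<lambda>x. x powr q) has_real_derivative q * x powr (q - 1)) (at x)" if "y \<le> x" "x \<le> y + d" for x
      using has_real_derivative_powr[of x q] that assms by simp
  qed (use assms in auto)
  have "z powr (q - 1) \<le> Y powr (q - 1)"
    using z assms by (intro powr_mono2') auto
  then have "d * (- q * z powr (q - 1)) \<le> d * (- q * Y powr (q - 1))"
    using assms by (intro mult_left_mono) auto
  with z(2) show ?thesis
    by (simp add: algebra_simps)
qed

lemma mult_powr_le_of_le_double: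
  fixes h Y \<alpha> :: real
  assumes "0 < h" "h \<le> 2 * Y" "\<alpha> \<le> 1"
  shows "h * Y powr (\<alpha> - 1) \<le> 2 powr (1 - \<alpha>) * h powr \<alpha>"
proof -
  have Y: "0 < Y" using assms by simp
  have "h * Y powr (\<alpha> - 1) = h powr \<alpha> * (h powr (1 - \<alpha>) * Y powr (\<alpha> - 1))"
    using assms by (simp add: powr_add[symmetric])
  also have "\<dots> \<le> h powr \<alpha> * ((2 * Y) powr (1 - \<alpha>) * Y powr (\<alpha> - 1))"
    using assms by (intro mult_left_mono mult_right_mono powr_mono2) auto
  also have "\<dots> = 2 powr (1 - \<alpha>) * h powr \<alpha>"
    using Y by (simp add: powr_mult powr_add[symmetric])
  finally show ?thesis .
qed

lemma kernel_diff_nonneg: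
  fixes \<alpha> b v \<tau> :: real
  assumes "\<alpha> \<le> 1" "v < b" "b \<le> \<tau>"
  shows "0 \<le> (b - v) powr (\<alpha> - 1) - (\<tau> - v) powr (\<alpha> - 1)"
  using assms by (auto intro!: powr_mono2')

lemma kernel_diff_le_majorant:
  fixes \<alpha> \<beta> a b h u v \<tau> :: real
  assumes "\<beta> \<le> 0" "\<alpha> < 1" "u \<le> a" "a < v" "v < b" "b < \<tau>" "\<tau> \<le> b + h"
  defines "Y \<equiv> (b - a) / 2"
  shows "((b - v) powr (\<alpha> - 1) - (\<tau> - v) powr (\<alpha> - 1)) * \<bar>v - u\<bar> powr \<beta>
    \<le> (1 - \<alpha>) * h * Y powr (\<alpha> - 2) * (v - a) powr \<beta>
       + Y powr \<beta> * ((b - v) powr (\<alpha> - 1) - (\<tau> - v) powr (\<alpha> - 1))"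
proof -
  define g where "g = (b - v) powr (\<alpha> - 1) - (\<tau> - v) powr (\<alpha> - 1)"
  have g_nonneg: "0 \<le> g"
    unfolding g_def using kernel_diff_nonneg assms by simp
  have "\<bar>v - u\<bar> powr \<beta> \<le> (v - a) powr \<beta>"
    using assms by (intro powr_mono2') auto
  then have "g * \<bar>v - u\<bar> powr \<beta> \<le> g * (v - a) powr \<beta>"
    using g_nonneg by (rule mult_left_mono)
  also have "\<dots> \<le> (1 - \<alpha>) * h * Y powr (\<alpha> - 2) * (v - a) powr \<beta> + Y powr \<beta> * g"
  proof (cases "v \<le> a + Y")
    case True
    have "0 < Y" "Y \<le> b - v"
      using True assms unfolding Y_def by (auto simp: field_simps)
    from powr_sub_powr_add_le[OF _ this, of "\<alpha> - 1" "\<tau> - b"]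
    have "g \<le> (1 - \<alpha>) * (\<tau> - b) * Y powr (\<alpha> - 2)"
      using assms by (simp add: g_def)
    also have "\<dots> \<le> (1 - \<alpha>) * h * Y powr (\<alpha> - 2)"
      using assms by (intro mult_right_mono mult_left_mono) auto
    finally have "g * (v - a) powr \<beta> \<le> (1 - \<alpha>) * h * Y powr (\<alpha> - 2) * (v - a) powr \<beta>"
      by (rule mult_right_mono) simp
    then show ?thesis
      using g_nonneg by (simp add: add_increasing2)
  next
    case False
    have "0 < Y" "Y \<le> v - a"
      using False assms unfolding Y_def by (auto simp: field_simps)
    then have "(v - a) powr \<beta> \<le> Y powr \<beta>"
      using assms by (intro powr_mono2') auto
    then have "g * (v - a) powr \<beta> \<le> Y powr \<beta> * g"
      using g_nonneg by (simp add: mult.commute mult_left_mono)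
    moreover have "0 \<le> (1 - \<alpha>) * h * Y powr (\<alpha> - 2) * (v - a) powr \<beta>"
      using assms by simp
    ultimately show ?thesis
      by linarith
  qed
  finally show ?thesis
    unfolding g_def .
qed

definition kernel_diff_const :: "real \<Rightarrow> real \<Rightarrow> real" where
  "kernel_diff_const \<beta> \<alpha> =
     ((1 - \<alpha>) * 2 powr (\<beta> + 1) / (\<beta> + 1) * 2 powr (1 - \<alpha>) + 1 / \<alpha>) * 4 powr (- \<beta>)"

lemma majorant_integral_le:
  fixes \<alpha> \<beta> h Y \<Delta> \<sigma> :: real
  assumes "-1 < \<beta>" "\<beta> \<le> 0" "0 < \<alpha>" "\<alpha> < 1" "0 < h" "h \<le> 2 * Y" "0 < \<sigma>" "\<sigma> \<le> 4 * Y"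
    and "\<Delta> \<le> h powr \<alpha> / \<alpha>"
  shows "(1 - \<alpha>) * h * Y powr (\<alpha> - 2) * ((2 * Y) powr (\<beta> + 1) / (\<beta> + 1)) + Y powr \<beta> * \<Delta>
    \<le> kernel_diff_const \<beta> \<alpha> * h powr \<alpha> * \<sigma> powr \<beta>"
proof -
  define c where "c = (1 - \<alpha>) * 2 powr (\<beta> + 1) / (\<beta> + 1)"
  have c_nonneg: "0 \<le> c"
    unfolding c_def using assms by simp
  have Y: "0 < Y"
    using assms by simp
  have "Y powr (\<alpha> - 2) = Y powr (\<alpha> - 1) / Y"
    using Y powr_diff[of Y "\<alpha> - 1" 1] by simp
  moreover have "(2 * Y) powr (\<beta> + 1) = 2 powr (\<beta> + 1) * Y powr \<beta> * Y"
    using Y by (simp add: powr_mult powr_add)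
  ultimately have "(1 - \<alpha>) * h * Y powr (\<alpha> - 2) * ((2 * Y) powr (\<beta> + 1) / (\<beta> + 1))
      = c * (h * Y powr (\<alpha> - 1)) * Y powr \<beta>"
    using Y unfolding c_def by simp
  also have "\<dots> \<le> c * (2 powr (1 - \<alpha>) * h powr \<alpha>) * Y powr \<beta>"
    using mult_powr_le_of_le_double[of h Y \<alpha>] assms c_nonneg
    by (intro mult_right_mono mult_left_mono) auto
  finally have first: "(1 - \<alpha>) * h * Y powr (\<alpha> - 2) * ((2 * Y) powr (\<beta> + 1) / (\<beta> + 1))
      \<le> c * 2 powr (1 - \<alpha>) * h powr \<alpha> * Y powr \<beta>"
    by (simp add: algebra_simps)
  have second: "Y powr \<beta> * \<Delta> \<le> 1 / \<alpha> * h powr \<alpha> * Y powr \<beta>"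
    using mult_left_mono[OF assms(9), of "Y powr \<beta>"] by (simp add: ac_simps)
  have "Y powr \<beta> \<le> (\<sigma> / 4) powr \<beta>"
    using assms by (intro powr_mono2') auto
  also have "\<dots> = 4 powr (- \<beta>) * \<sigma> powr \<beta>"
    using assms by (simp add: powr_divide powr_minus_divide)
  finally have "(c * 2 powr (1 - \<alpha>) + 1 / \<alpha>) * h powr \<alpha> * Y powr \<beta>
      \<le> (c * 2 powr (1 - \<alpha>) + 1 / \<alpha>) * h powr \<alpha> * (4 powr (- \<beta>) * \<sigma> powr \<beta>)"
    using assms c_nonneg by (intro mult_left_mono) auto
  with first second show ?thesis
    unfolding kernel_diff_const_def c_def by (simp add: algebra_simps)
qed

lemma kernel_diff_integral_le:
  fixes \<alpha> \<beta> a b h s u \<tau> :: real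
  assumes \<beta>: "-1 < \<beta>" "\<beta> \<le> 0" and \<alpha>: "0 < \<alpha>" "\<alpha> < 1"
    and grid: "0 < h" "a + h \<le> b" "u \<le> a" "a < s" "s \<le> a + h" "b < \<tau>" "\<tau> \<le> b + h"
  shows "(LBINT v:{a..b}. ((b - v) powr (\<alpha> - 1) - (\<tau> - v) powr (\<alpha> - 1)) * \<bar>v - u\<bar> powr \<beta>)
    \<le> kernel_diff_const \<beta> \<alpha> * h powr \<alpha> * (\<tau> - s) powr \<beta>"
proof -
  define Y where "Y = (b - a) / 2"
  define K where "K = (1 - \<alpha>) * h * Y powr (\<alpha> - 2)"
  define g where "g v = (b - v) powr (\<alpha> - 1) - (\<tau> - v) powr (\<alpha> - 1)" for v
  define G where "G v = K * (v - a) powr \<beta> + Y powr \<beta> * g v" for v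
  define \<Delta> where "\<Delta> = ((b - a) powr \<alpha> - ((\<tau> - a) powr \<alpha> - (\<tau> - b) powr \<alpha>)) / \<alpha>"
  have ab: "a \<le> b" and b\<tau>: "b \<le> \<tau>"
    using grid by auto
  have I1: "set_integrable lborel {a..b} (\<lambda>v. (v - a) powr \<beta>)"
    "(LBINT v:{a..b}. (v - a) powr \<beta>) = (b - a) powr (\<beta> + 1) / (\<beta> + 1)"
    using set_integral_of_nonneg_has_integral[OF has_integral_powr_shifted[OF \<beta>(1) order_refl ab]]
    by simp_all
  have I2: "set_integrable lborel {a..b} (\<lambda>v. (b - v) powr (\<alpha> - 1))"
    "(LBINT v:{a..b}. (b - v) powr (\<alpha> - 1)) = (b - a) powr \<alpha> / \<alpha>"
    using set_integral_of_nonneg_has_integral[OF has_integral_powr_reflected[of "\<alpha> - 1" a b b]] \<alpha> ab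
    by simp_all
  have I3: "set_integrable lborel {a..b} (\<lambda>v. (\<tau> - v) powr (\<alpha> - 1))"
    "(LBINT v:{a..b}. (\<tau> - v) powr (\<alpha> - 1)) = ((\<tau> - a) powr \<alpha> - (\<tau> - b) powr \<alpha>) / \<alpha>"
    using set_integral_of_nonneg_has_integral[OF has_integral_powr_reflected[of "\<alpha> - 1" a b \<tau>]] \<alpha> ab b\<tau>
    by simp_all
  have G_integrable: "set_integrable lborel {a..b} G"
    unfolding G_def g_def
    by (intro set_integral_add(1) set_integrable_mult_right set_integral_diff(1) I1 I2 I3)
  have G_integral: "(LBINT v:{a..b}. G v) = K * ((b - a) powr (\<beta> + 1) / (\<beta> + 1)) + Y powr \<beta> * \<Delta>"
    unfolding G_def g_def \<Delta>_def
    by (simp add: set_integral_add set_integral_diff set_integrable_mult_right I1 I2 I3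
        diff_divide_distrib)
  have interior: "AE v\<in>{a..b} in lborel. a < v \<and> v < b"
    using AE_lborel_singleton[of a] AE_lborel_singleton[of b] by eventually_elim auto
  have "AE v\<in>{a..b} in lborel. g v * \<bar>v - u\<bar> powr \<beta> \<le> G v"
    using interior
    by eventually_elim
      (use kernel_diff_le_majorant[of \<beta> \<alpha> u a] \<beta> \<alpha> grid in \<open>auto simp: G_def g_def K_def Y_def\<close>)
  moreover have "AE v\<in>{a..b} in lborel. 0 \<le> G v"
    using interior
    by eventually_elim
      (use kernel_diff_nonneg[of \<alpha> _ b \<tau>] \<alpha> grid in \<open>auto simp: G_def g_def K_def\<close>)
  ultimately have "(LBINT v:{a..b}. g v * \<bar>v - u\<bar> powr \<beta>) \<le> (LBINT v:{a..b}. G v)"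
    using G_integrable by (intro set_integral_mono_majorant)
  also have "\<dots> \<le> kernel_diff_const \<beta> \<alpha> * h powr \<alpha> * (\<tau> - s) powr \<beta>"
  proof -
    have "(b - a) powr \<alpha> \<le> (\<tau> - a) powr \<alpha>" "(\<tau> - b) powr \<alpha> \<le> h powr \<alpha>"
      using grid \<alpha> by (auto intro!: powr_mono2)
    then have \<Delta>_le: "\<Delta> \<le> h powr \<alpha> / \<alpha>"
      unfolding \<Delta>_def using \<alpha> by (intro divide_right_mono) auto
    have "b - a = 2 * Y" "h \<le> 2 * Y" "0 < \<tau> - s" "\<tau> - s \<le> 4 * Y"
      using grid by (auto simp: Y_def)
    with majorant_integral_le[OF \<beta> \<alpha> grid(1) _ _ _ \<Delta>_le] show ?thesis
      unfolding G_integral K_def by simp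
  qed
  finally show ?thesis
    unfolding g_def .
qed

theorem lemma3p4:
  fixes H \<alpha> T :: real
  assumes "1/2 < H" "H < 1" "1 - H < \<alpha>" "\<alpha> < 1" "T > 0"
  shows "\<exists>C::real. \<forall>N::nat. \<forall>k l::nat. \<forall>u s \<tau>::real.
     (let h = T / real N; t = (\<lambda>n::nat. real n * h) in
       (N \<ge> 2 \<and> 1 \<le> k \<and> k < l \<and> l \<le> N \<and>
        0 < u \<and> u \<le> t (k - 1) \<and> t (k - 1) < s \<and> s \<le> t k \<and>
        t (l - 1) < \<tau> \<and> \<tau> \<le> t l) \<longrightarrow>
       (LBINT v:{t (k - 1)..t (l - 1)}.
          ((t (l - 1) - v) powr (\<alpha> - 1) - (\<tau> - v) powr (\<alpha> - 1)) * \<bar>v - u\<bar> powr (2 * H - 2))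
       \<le> C * h powr \<alpha> * (\<tau> - s) powr (2 * H - 2))"
proof -
  \<comment> \<open>The hypothesis \<open>1 - H < \<alpha>\<close> is only needed in the weaker form \<open>0 < \<alpha>\<close>.\<close>
  have \<beta>: "-1 < 2 * H - 2" "2 * H - 2 \<le> 0" and \<alpha>: "0 < \<alpha>" "\<alpha> < 1"
    using assms by auto
  have bound: "(LBINT v:{real (k - 1) * h..real (l - 1) * h}.
      ((real (l - 1) * h - v) powr (\<alpha> - 1) - (\<tau> - v) powr (\<alpha> - 1)) * \<bar>v - u\<bar> powr (2 * H - 2))
    \<le> kernel_diff_const (2 * H - 2) \<alpha> * h powr \<alpha> * (\<tau> - s) powr (2 * H - 2)"
    if "0 < h" "1 \<le> k" "k < l" "u \<le> real (k - 1) * h" "real (k - 1) * h < s" "s \<le> real k * h"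
      "real (l - 1) * h < \<tau>" "\<tau> \<le> real l * h"
    for k l :: nat and h u s \<tau> :: real
  proof (rule kernel_diff_integral_le[OF \<beta> \<alpha>])
    have "real k = real (k - 1) + 1" "real l = real (l - 1) + 1" "real (k - 1) + 1 \<le> real (l - 1)"
      using that by auto
    then show "real (k - 1) * h + h \<le> real (l - 1) * h" "s \<le> real (k - 1) * h + h"
      "\<tau> \<le> real (l - 1) * h + h"
      using that mult_right_mono[of "real (k - 1) + 1" "real (l - 1)" h] by (auto simp: algebra_simps)
  qed (use that in auto)
  show ?thesis
    unfolding Let_def
    by (intro exI[of _ "kernel_diff_const (2 * H - 2) \<alpha>"] allI impI, elim conjE, rule bound)
       (use assms(5) in auto)
qed

end
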